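(* Let $G=\{G_t,t\geq 0\}$ be a centered Gaussian process such that $G_0=0$ and there exist constants $c>0$ and $\gamma\in(0,1)$ with $E[(G_t-G_s)^2]\leq c|t-s|^{2\gamma}$ for all $s,t\geq 0$. Let $\theta>0$, $\mu\in\mathbb{R}$, let $X$ be the solution of $X_0=0$, $dX_t=\theta(\mu+X_t)dt+dG_t$, and let $\zeta_\infty=\theta\int_0^\infty e^{-\theta s}G_s\,ds$. Then almost surely, as $T\to\infty$: (i) $e^{-\theta T}X_T\to \mu+\zeta_\infty$; (ii) $e^{-\theta T}\int_0^T X_s\,ds\to \frac{1}{\theta}(\mu+\zeta_\infty)$; (iii) $\frac{e^{-\theta T}}{T}\int_0^T sX_s\,ds\to \frac{1}{\theta}(\mu+\zeta_\infty)$; (iv) for any $\delta>0$, $\frac{e^{-\theta T}}{T^{\delta}}\int_0^T|X_s|\,ds\to 0$; (v) $e^{-2\theta T}\int_0^T X_s^2\,ds\to \frac{1}{2\theta}(\mu+\zeta_\infty)^2$.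
   Context: $G$ is taken in a modification with locally $(\gamma-\varepsilon)$-Hölder continuous paths for every $\varepsilon\in(0,\gamma)$. The process $X$ is the unique pathwise solution of the equation, i.e. $X_t=\mu\theta t+\theta\int_0^t X_s\,ds+G_t$; explicitly $X_t=\mu(e^{\theta t}-1)+e^{\theta t}\int_0^t e^{-\theta s}dG_s$ with a Young integral. The integral defining $\zeta_\infty$ converges almost surely. *)

theory Defs
  imports "HOL-Probability.Probability"
begin

definition gaussian_rv :: "'a measure \<Rightarrow> ('a \<Rightarrow> real) \<Rightarrow> bool" where
  "gaussian_rv M Y \<longleftrightarrow>
     (\<exists>m \<sigma>. \<sigma> > 0 \<and> distributed M lborel Y (normal_density m \<sigma>)) \<or>
     (\<exists>c. AE \<omega> in M. Y \<omega> = c)"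

definition gaussian_process :: "'a measure \<Rightarrow> (real \<Rightarrow> 'a \<Rightarrow> real) \<Rightarrow> bool" where
  "gaussian_process M G \<longleftrightarrow>
     (\<forall>t\<ge>0. G t \<in> borel_measurable M) \<and>
     (\<forall>(n::nat) (ts::nat \<Rightarrow> real) (a::nat \<Rightarrow> real). (\<forall>i<n. ts i \<ge> 0) \<longrightarrow>
        gaussian_rv M (\<lambda>\<omega>. \<Sum>i<n. a i * G (ts i) \<omega>))"

definition centered_process :: "'a measure \<Rightarrow> (real \<Rightarrow> 'a \<Rightarrow> real) \<Rightarrow> bool" where
  "centered_process M G \<longleftrightarrow> (\<forall>t\<ge>0. integrable M (G t) \<and> integral\<^sup>L M (G t) = 0)"

definition zeta_inf :: "real \<Rightarrow> (real \<Rightarrow> 'a \<Rightarrow> real) \<Rightarrow> 'a \<Rightarrow> real" where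
  "zeta_inf \<theta> G \<omega> = \<theta> * (LBINT s:{0..}. exp (- \<theta> * s) * G s \<omega>)"

end

theory Submission
  imports Defs "HOL-Real_Asymp.Real_Asymp"
begin

(* Put Y T = integral of X over [0, T]. The equation says Y' = theta Y + mu theta t + G t, and variation
   of constants expresses exp (- theta T) Y T through the integral of exp (- theta s) G s over [0, T].
   Hence (ii), and then (i), hold along every path of G that grows more slowly than exp (theta t);
   (iii)-(v) follow from (i) by L'Hopital's rule.
   That growth bound is the probabilistic part. Gaussian moments give E (G t - G s)^(2m) <= C |t - s|^(2 m gamma),
   and dyadic chaining bounds the oscillation of G on each interval [n, n + 1] by a random variable S n
   with E (S n) <= K for all n. So the sum over n of exp (- a n) (|G n| + S n) has finite expectation,
   hence is finite almost surely, and this gives |G t| <= w exp (a t) for every a > 0. *)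

section \<open>A linear equation with exponentially bounded forcing\<close>

lemma set_integrable_exp_neg_nonneg:
  fixes a :: real
  assumes "a > 0"
  shows "set_integrable lborel {0..} (\<lambda>s. exp (- a * s))"
proof -
  have "(\<lambda>s. exp (- a * s)) absolutely_integrable_on {0..}"
    by (rule nonnegative_absolutely_integrable_1[OF integrable_on_exp_minus_to_infinity[OF assms]]) auto
  then show ?thesis
    unfolding set_integrable_def by (subst (asm) integrable_completion) auto
qed

lemma abs_exp_weighted_le:
  fixes g :: "real \<Rightarrow> real"
  assumes "\<bar>g t\<bar> \<le> w * exp (a * t)"
  shows "\<bar>exp (- \<theta> * t) * g t\<bar> \<le> w * exp (- (\<theta> - a) * t)"
proof -
  have "\<bar>exp (- \<theta> * t) * g t\<bar> \<le> exp (- \<theta> * t) * (w * exp (a * t))"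
    using assms by (simp add: abs_mult mult_left_mono)
  also have "\<dots> = w * exp (- (\<theta> - a) * t)"
    by (simp add: algebra_simps flip: exp_add)
  finally show ?thesis .
qed

lemma set_integrable_exp_weighted:
  fixes g :: "real \<Rightarrow> real"
  assumes "a < \<theta>" "continuous_on {0..} g" "\<And>t. 0 \<le> t \<Longrightarrow> \<bar>g t\<bar> \<le> w * exp (a * t)"
  shows "set_integrable lborel {0..} (\<lambda>s. exp (- \<theta> * s) * g s)"
proof (rule set_integrable_bound)
  show "set_integrable lborel {0..} (\<lambda>s. w * exp (- (\<theta> - a) * s))"
    using set_integrable_exp_neg_nonneg[of "\<theta> - a"] assms(1) by (intro set_integrable_mult_right) auto
  show "set_borel_measurable lborel {0..} (\<lambda>s. exp (- \<theta> * s) * g s)"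
  proof -
    have "continuous_on {0..} (\<lambda>s. exp (- \<theta> * s) * g s)"
      by (intro continuous_intros assms(2))
    from borel_measurable_continuous_on_indicator[OF _ this] show ?thesis
      unfolding set_borel_measurable_def by simp
  qed
  show "AE s in lborel. s \<in> {0..} \<longrightarrow> norm (exp (- \<theta> * s) * g s) \<le> norm (w * exp (- (\<theta> - a) * s))"
  proof (intro AE_I2 impI)
    fix s :: real
    assume "s \<in> {0..}"
    then have "\<bar>exp (- \<theta> * s) * g s\<bar> \<le> w * exp (- (\<theta> - a) * s)"
      by (intro abs_exp_weighted_le assms(3)) simp
    then show "norm (exp (- \<theta> * s) * g s) \<le> norm (w * exp (- (\<theta> - a) * s))"
      by simp
  qed
qed

lemma tendsto_exp_weighted_zero:
  fixes g :: "real \<Rightarrow> real"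
  assumes "a < \<theta>" "\<And>t. 0 \<le> t \<Longrightarrow> \<bar>g t\<bar> \<le> w * exp (a * t)"
  shows "((\<lambda>t. exp (- \<theta> * t) * g t) \<longlongrightarrow> 0) at_top"
proof (rule Lim_null_comparison)
  show "\<forall>\<^sub>F t in at_top. norm (exp (- \<theta> * t) * g t) \<le> w * exp (- (\<theta> - a) * t)"
    using eventually_ge_at_top[of 0]
  proof eventually_elim
    case (elim t)
    show ?case using abs_exp_weighted_le[of g t w a \<theta>] assms(2)[OF elim] by simp
  qed
  show "((\<lambda>t. w * exp (- (\<theta> - a) * t)) \<longlongrightarrow> 0) at_top"
    using assms(1) by real_asymp
qed

lemma has_real_derivative_integral_from_0:
  fixes f :: "real \<Rightarrow> real"
  assumes "continuous_on {0..} f" "0 < T"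
  shows "((\<lambda>x. integral {0..x} f) has_real_derivative f T) (at T)"
proof -
  have "continuous_on {0..T+1} f"
    using assms(1) by (rule continuous_on_subset) auto
  then have "((\<lambda>x. integral {0..x} f) has_real_derivative f T) (at T within {0..T+1})"
    using assms(2) by (intro integral_has_real_derivative) auto
  moreover have "at T within {0..T+1} = at T"
    using assms(2) by (intro at_within_interior) auto
  ultimately show ?thesis by simp
qed

lemma tendsto_integral_div_at_top:
  fixes f \<phi> \<phi>' :: "real \<Rightarrow> real"
  assumes "continuous_on {0..} f" "filterlim \<phi> at_top at_top"
    and "\<And>T. 0 < T \<Longrightarrow> (\<phi> has_real_derivative \<phi>' T) (at T)"
    and "\<And>T. 0 < T \<Longrightarrow> \<phi>' T \<noteq> 0"
    and "((\<lambda>T. f T / \<phi>' T) \<longlongrightarrow> L) at_top"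
  shows "((\<lambda>T. integral {0..T} f / \<phi> T) \<longlongrightarrow> L) at_top"
proof (rule lhospital_at_top_at_top[OF assms(2) _ _ _ assms(5)])
  show "\<forall>\<^sub>F T in at_top. \<phi>' T \<noteq> 0"
    using eventually_gt_at_top[of 0] by eventually_elim (rule assms(4))
  show "\<forall>\<^sub>F T in at_top. ((\<lambda>T. integral {0..T} f) has_real_derivative f T) (at T)"
    using eventually_gt_at_top[of 0] by eventually_elim (rule has_real_derivative_integral_from_0[OF assms(1)])
  show "\<forall>\<^sub>F T in at_top. (\<phi> has_real_derivative \<phi>' T) (at T)"
    using eventually_gt_at_top[of 0] by eventually_elim (rule assms(3))
qed

lemma tendsto_integral_at_top_set_integrable:
  fixes f :: "real \<Rightarrow> real"
  assumes "set_integrable lborel {0..} f"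
  shows "((\<lambda>T. integral {0..T} f) \<longlongrightarrow> (LBINT s:{0..}. f s)) at_top"
proof -
  have "((\<lambda>T. LBINT s:{0..T}. f s) \<longlongrightarrow> (LBINT s:{0..}. f s)) at_top"
    by (rule tendsto_set_lebesgue_integral_at_top[OF _ assms]) auto
  moreover have "(LBINT s:{0..T}. f s) = integral {0..T} f" for T
    by (rule set_borel_integral_eq_integral(2)[OF set_integrable_subset[OF assms]]) auto
  ultimately show ?thesis
    by simp
qed

lemma linear_ode_integral_formula:
  fixes X g :: "real \<Rightarrow> real" and \<theta> \<mu> T :: real
  assumes "\<theta> \<noteq> 0" "continuous_on {0..} X"
    and "\<And>t. 0 \<le> t \<Longrightarrow> X t = \<mu> * \<theta> * t + \<theta> * integral {0..t} X + g t"
    and "0 \<le> T"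
  shows "exp (- \<theta> * T) * integral {0..T} X
           = \<mu> * (1 / \<theta> - (T + 1 / \<theta>) * exp (- \<theta> * T)) + integral {0..T} (\<lambda>s. exp (- \<theta> * s) * g s)"
proof -
  define H where "H t = exp (- \<theta> * t) * integral {0..t} X + \<mu> * (t + 1 / \<theta>) * exp (- \<theta> * t)" for t
  have "(H has_real_derivative exp (- \<theta> * t) * g t) (at t within {0..T})" if t: "t \<in> {0..T}" for t
  proof -
    have "continuous_on {0..T} X"
      using assms(2) by (rule continuous_on_subset) auto
    then have "((\<lambda>x. integral {0..x} X) has_real_derivative X t) (at t within {0..T})"
      using t by (rule integral_has_real_derivative)
    then have "(H has_real_derivative exp (- \<theta> * t) * (X t - \<theta> * integral {0..t} X - \<mu> * \<theta> * t)) (at t within {0..T})"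
      unfolding H_def using assms(1)
      by (auto intro!: derivative_eq_intros simp: field_simps)
    then show ?thesis
      using assms(3)[of t] t by simp
  qed
  then have "((\<lambda>s. exp (- \<theta> * s) * g s) has_integral H T - H 0) {0..T}"
    using assms(4) by (intro fundamental_theorem_of_calculus) (auto simp: has_real_derivative_iff_has_vector_derivative)
  then have "integral {0..T} (\<lambda>s. exp (- \<theta> * s) * g s) = H T - \<mu> / \<theta>"
    by (simp add: integral_unique H_def)
  then show ?thesis
    by (simp add: H_def algebra_simps)
qed

lemma linear_ode_exp_limits:
  fixes X g :: "real \<Rightarrow> real" and \<theta> \<mu> :: real
  assumes "\<theta> > 0" "continuous_on {0..} X"
    and X_eq: "\<And>t. 0 \<le> t \<Longrightarrow> X t = \<mu> * \<theta> * t + \<theta> * integral {0..t} X + g t"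
    and g_int: "set_integrable lborel {0..} (\<lambda>s. exp (- \<theta> * s) * g s)"
    and g_lim: "((\<lambda>t. exp (- \<theta> * t) * g t) \<longlongrightarrow> 0) at_top"
  defines "L \<equiv> \<mu> + \<theta> * (LBINT s:{0..}. exp (- \<theta> * s) * g s)"
  shows "((\<lambda>T. exp (- \<theta> * T) * integral {0..T} X) \<longlongrightarrow> L / \<theta>) at_top"
    and "((\<lambda>T. exp (- \<theta> * T) * X T) \<longlongrightarrow> L) at_top"
proof -
  have "((\<lambda>T. integral {0..T} (\<lambda>s. exp (- \<theta> * s) * g s)) \<longlongrightarrow> (LBINT s:{0..}. exp (- \<theta> * s) * g s)) at_top"
    using g_int by (rule tendsto_integral_at_top_set_integrable)
  moreover have "((\<lambda>T. (T + 1 / \<theta>) * exp (- \<theta> * T)) \<longlongrightarrow> 0) at_top"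
    using assms(1) by real_asymp
  ultimately have "((\<lambda>T. \<mu> * (1 / \<theta> - (T + 1 / \<theta>) * exp (- \<theta> * T)) + integral {0..T} (\<lambda>s. exp (- \<theta> * s) * g s))
      \<longlongrightarrow> \<mu> * (1 / \<theta> - 0) + (LBINT s:{0..}. exp (- \<theta> * s) * g s)) at_top"
    by (intro tendsto_intros)
  moreover have "\<mu> * (1 / \<theta> - 0) + (LBINT s:{0..}. exp (- \<theta> * s) * g s) = L / \<theta>"
    using assms(1) by (simp add: L_def field_simps)
  moreover have "\<forall>\<^sub>F T in at_top. \<mu> * (1 / \<theta> - (T + 1 / \<theta>) * exp (- \<theta> * T))
      + integral {0..T} (\<lambda>s. exp (- \<theta> * s) * g s) = exp (- \<theta> * T) * integral {0..T} X"
    using eventually_ge_at_top[of 0]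
    by eventually_elim (use linear_ode_integral_formula[OF _ assms(2) X_eq] assms(1) in simp)
  ultimately show Y_lim: "((\<lambda>T. exp (- \<theta> * T) * integral {0..T} X) \<longlongrightarrow> L / \<theta>) at_top"
    by (auto intro: Lim_transform_eventually)
  have "((\<lambda>T. \<mu> * \<theta> * (T * exp (- \<theta> * T)) + \<theta> * (exp (- \<theta> * T) * integral {0..T} X) + exp (- \<theta> * T) * g T)
      \<longlongrightarrow> \<mu> * \<theta> * 0 + \<theta> * (L / \<theta>) + 0) at_top"
    using assms(1) by (intro tendsto_intros Y_lim g_lim) real_asymp
  moreover have "\<forall>\<^sub>F T in at_top. \<mu> * \<theta> * (T * exp (- \<theta> * T)) + \<theta> * (exp (- \<theta> * T) * integral {0..T} X)
      + exp (- \<theta> * T) * g T = exp (- \<theta> * T) * X T"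
    using eventually_ge_at_top[of 0] by eventually_elim (simp add: X_eq algebra_simps)
  ultimately show "((\<lambda>T. exp (- \<theta> * T) * X T) \<longlongrightarrow> L) at_top"
    using assms(1) by (auto intro: Lim_transform_eventually)
qed

lemma tendsto_exp_integral_mult_self:
  fixes X :: "real \<Rightarrow> real"
  assumes "\<theta> > 0" "continuous_on {0..} X" and X_lim: "((\<lambda>T. exp (- \<theta> * T) * X T) \<longlongrightarrow> L) at_top"
  shows "((\<lambda>T. exp (- \<theta> * T) / T * integral {0..T} (\<lambda>s. s * X s)) \<longlongrightarrow> L / \<theta>) at_top"
proof -
  have "((\<lambda>T. integral {0..T} (\<lambda>s. s * X s) / (T * exp (\<theta> * T))) \<longlongrightarrow> L / \<theta>) at_top"
  proof (rule tendsto_integral_div_at_top)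
    show "continuous_on {0..} (\<lambda>s. s * X s)"
      by (intro continuous_intros assms(2))
    show "filterlim (\<lambda>T. T * exp (\<theta> * T)) at_top at_top"
      using assms(1) by real_asymp
    show "((\<lambda>T. T * exp (\<theta> * T)) has_real_derivative exp (\<theta> * T) * (1 + \<theta> * T)) (at T)" for T
      by (auto intro!: derivative_eq_intros simp: algebra_simps)
    show "exp (\<theta> * T) * (1 + \<theta> * T) \<noteq> 0" if "0 < T" for T
    proof -
      have "0 < 1 + \<theta> * T"
        using assms(1) that by (intro add_pos_pos mult_pos_pos) auto
      then show ?thesis by simp
    qed
    have "((\<lambda>T. T / (1 + \<theta> * T)) \<longlongrightarrow> 1 / \<theta>) at_top"
      using assms(1) by real_asymp (simp add: field_simps)
    with X_lim have "((\<lambda>T. exp (- \<theta> * T) * X T * (T / (1 + \<theta> * T))) \<longlongrightarrow> L * (1 / \<theta>)) at_top"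
      by (rule tendsto_mult)
    moreover have "\<forall>\<^sub>F T in at_top. exp (- \<theta> * T) * X T * (T / (1 + \<theta> * T)) = T * X T / (exp (\<theta> * T) * (1 + \<theta> * T))"
      using eventually_ge_at_top[of 0]
      by eventually_elim (use assms(1) in \<open>simp add: exp_minus field_simps add_pos_nonneg\<close>)
    ultimately show "((\<lambda>T. T * X T / (exp (\<theta> * T) * (1 + \<theta> * T))) \<longlongrightarrow> L / \<theta>) at_top"
      by (auto intro: Lim_transform_eventually)
  qed
  then show ?thesis
    by (rule Lim_transform_eventually) (simp add: exp_minus field_simps)
qed

lemma tendsto_exp_powr_integral_abs:
  fixes X :: "real \<Rightarrow> real"
  assumes "\<theta> > 0" "\<delta> > 0" "continuous_on {0..} X" and X_lim: "((\<lambda>T. exp (- \<theta> * T) * X T) \<longlongrightarrow> L) at_top"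
  shows "((\<lambda>T. exp (- \<theta> * T) / T powr \<delta> * integral {0..T} (\<lambda>s. \<bar>X s\<bar>)) \<longlongrightarrow> 0) at_top"
proof -
  define \<phi>' where "\<phi>' T = exp (\<theta> * T) * (\<delta> * T powr (\<delta> - 1) + \<theta> * T powr \<delta>)" for T
  have "((\<lambda>T. integral {0..T} (\<lambda>s. \<bar>X s\<bar>) / (T powr \<delta> * exp (\<theta> * T))) \<longlongrightarrow> 0) at_top"
  proof (rule tendsto_integral_div_at_top)
    show "continuous_on {0..} (\<lambda>s. \<bar>X s\<bar>)"
      by (intro continuous_intros assms(3))
    show "filterlim (\<lambda>T. T powr \<delta> * exp (\<theta> * T)) at_top at_top"
      using assms(1,2) by real_asymp
    show "((\<lambda>T. T powr \<delta> * exp (\<theta> * T)) has_real_derivative \<phi>' T) (at T)" if "0 < T" for T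
      using that unfolding \<phi>'_def by (auto intro!: derivative_eq_intros simp: algebra_simps)
    show "\<phi>' T \<noteq> 0" if "0 < T" for T
    proof -
      have "0 < \<delta> * T powr (\<delta> - 1) + \<theta> * T powr \<delta>"
        using assms(1,2) that by (intro add_pos_pos mult_pos_pos) auto
      then show ?thesis unfolding \<phi>'_def by simp
    qed
    have "((\<lambda>T. \<bar>exp (- \<theta> * T) * X T\<bar> / (\<delta> * T powr (\<delta> - 1) + \<theta> * T powr \<delta>)) \<longlongrightarrow> 0) at_top"
    proof (rule tendsto_divide_0)
      show "((\<lambda>T. \<bar>exp (- \<theta> * T) * X T\<bar>) \<longlongrightarrow> \<bar>L\<bar>) at_top"
        by (intro tendsto_intros X_lim)
      show "filterlim (\<lambda>T. \<delta> * T powr (\<delta> - 1) + \<theta> * T powr \<delta>) at_infinity at_top"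
        using assms(1,2) by (intro filterlim_at_top_imp_at_infinity) real_asymp
    qed
    moreover have "\<forall>\<^sub>F T in at_top. \<bar>exp (- \<theta> * T) * X T\<bar> / (\<delta> * T powr (\<delta> - 1) + \<theta> * T powr \<delta>) = \<bar>X T\<bar> / \<phi>' T"
      using eventually_gt_at_top[of 0]
      by eventually_elim (simp add: \<phi>'_def exp_minus field_simps abs_mult)
    ultimately show "((\<lambda>T. \<bar>X T\<bar> / \<phi>' T) \<longlongrightarrow> 0) at_top"
      by (rule Lim_transform_eventually)
  qed
  then show ?thesis
    by (rule Lim_transform_eventually) (simp add: exp_minus field_simps)
qed

lemma tendsto_exp_integral_square:
  fixes X :: "real \<Rightarrow> real"
  assumes "\<theta> > 0" "continuous_on {0..} X" and X_lim: "((\<lambda>T. exp (- \<theta> * T) * X T) \<longlongrightarrow> L) at_top"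
  shows "((\<lambda>T. exp (- 2 * \<theta> * T) * integral {0..T} (\<lambda>s. (X s)\<^sup>2)) \<longlongrightarrow> L\<^sup>2 / (2 * \<theta>)) at_top"
proof -
  have "((\<lambda>T. integral {0..T} (\<lambda>s. (X s)\<^sup>2) / exp (2 * \<theta> * T)) \<longlongrightarrow> L\<^sup>2 / (2 * \<theta>)) at_top"
  proof (rule tendsto_integral_div_at_top)
    show "continuous_on {0..} (\<lambda>s. (X s)\<^sup>2)"
      by (intro continuous_intros assms(2))
    show "filterlim (\<lambda>T. exp (2 * \<theta> * T)) at_top at_top"
      using assms(1) by real_asymp
    show "((\<lambda>T. exp (2 * \<theta> * T)) has_real_derivative exp (2 * \<theta> * T) * (2 * \<theta>)) (at T)" for T
      by (auto intro!: derivative_eq_intros)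
    show "exp (2 * \<theta> * T) * (2 * \<theta>) \<noteq> 0" for T
      using assms(1) by simp
    have "((\<lambda>T. (exp (- \<theta> * T) * X T)\<^sup>2 / (2 * \<theta>)) \<longlongrightarrow> L\<^sup>2 / (2 * \<theta>)) at_top"
      by (intro tendsto_intros X_lim) (use assms(1) in simp)
    moreover have "(exp (- \<theta> * T) * X T)\<^sup>2 / (2 * \<theta>) = (X T)\<^sup>2 / (exp (2 * \<theta> * T) * (2 * \<theta>))" for T
      by (simp add: exp_minus field_simps flip: exp_double)
    ultimately show "((\<lambda>T. (X T)\<^sup>2 / (exp (2 * \<theta> * T) * (2 * \<theta>))) \<longlongrightarrow> L\<^sup>2 / (2 * \<theta>)) at_top"
      by simp
  qed
  then show ?thesis
    by (rule Lim_transform_eventually) (simp add: exp_minus field_simps)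
qed

lemma linear_ode_exp_asymptotics:
  fixes X g :: "real \<Rightarrow> real" and \<theta> \<mu> a w :: real
  assumes "\<theta> > 0" "a < \<theta>" "continuous_on {0..} X" "continuous_on {0..} g"
    and X_eq: "\<And>t. 0 \<le> t \<Longrightarrow> X t = \<mu> * \<theta> * t + \<theta> * integral {0..t} X + g t"
    and g_bound: "\<And>t. 0 \<le> t \<Longrightarrow> \<bar>g t\<bar> \<le> w * exp (a * t)"
  defines "L \<equiv> \<mu> + \<theta> * (LBINT s:{0..}. exp (- \<theta> * s) * g s)"
  shows "((\<lambda>T. exp (- \<theta> * T) * X T) \<longlongrightarrow> L) at_top \<and>
      ((\<lambda>T. exp (- \<theta> * T) * integral {0..T} X) \<longlongrightarrow> L / \<theta>) at_top \<and>
      ((\<lambda>T. exp (- \<theta> * T) / T * integral {0..T} (\<lambda>s. s * X s)) \<longlongrightarrow> L / \<theta>) at_top \<and>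
      (\<forall>\<delta>>0. ((\<lambda>T. exp (- \<theta> * T) / T powr \<delta> * integral {0..T} (\<lambda>s. \<bar>X s\<bar>)) \<longlongrightarrow> 0) at_top) \<and>
      ((\<lambda>T. exp (- 2 * \<theta> * T) * integral {0..T} (\<lambda>s. (X s)\<^sup>2)) \<longlongrightarrow> L\<^sup>2 / (2 * \<theta>)) at_top"
proof -
  have g_int: "set_integrable lborel {0..} (\<lambda>s. exp (- \<theta> * s) * g s)"
    using assms(2,4) g_bound by (rule set_integrable_exp_weighted)
  have g_lim: "((\<lambda>t. exp (- \<theta> * t) * g t) \<longlongrightarrow> 0) at_top"
    using assms(2) g_bound by (rule tendsto_exp_weighted_zero)
  note limits = linear_ode_exp_limits[OF assms(1,3) X_eq g_int g_lim, folded L_def]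
  show ?thesis
    using limits tendsto_exp_integral_mult_self[OF assms(1,3) limits(2)]
      tendsto_exp_powr_integral_abs[OF assms(1) _ assms(3) limits(2)]
      tendsto_exp_integral_square[OF assms(1,3) limits(2)]
    by blast
qed

section \<open>Even moments of Gaussian increments\<close>

lemma nn_integral_normal_even_power:
  assumes D: "distributed M lborel Z (normal_density 0 \<sigma>)" and "\<sigma> > 0"
  shows "(\<integral>\<^sup>+\<omega>. ennreal ((Z \<omega>) ^ (2 * p)) \<partial>M) = ennreal (fact (2 * p) / ((2 / \<sigma>\<^sup>2) ^ p * fact p))"
proof -
  have "(\<integral>\<^sup>+\<omega>. ennreal ((Z \<omega>) ^ (2 * p)) \<partial>M) = (\<integral>\<^sup>+x. ennreal (normal_density 0 \<sigma> x) * ennreal (x ^ (2 * p)) \<partial>lborel)"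
    by (rule distributed_nn_integral[OF D, symmetric]) simp
  also have "\<dots> = (\<integral>\<^sup>+x. ennreal (normal_density 0 \<sigma> x * (x - 0) ^ (2 * p)) \<partial>lborel)"
    by (intro nn_integral_cong) (simp add: ennreal_mult' power_mult)
  also have "\<dots> = ennreal (integral\<^sup>L lborel (\<lambda>x. normal_density 0 \<sigma> x * (x - 0) ^ (2 * p)))"
    by (intro nn_integral_eq_integral integrable.intros[OF normal_moment_even[OF assms(2)]] AE_I2)
       (simp add: power_mult)
  also have "\<dots> = ennreal (fact (2 * p) / ((2 / \<sigma>\<^sup>2) ^ p * fact p))"
    using integral_normal_moment_even[OF assms(2), of 0 p] by simp
  finally show ?thesis .
qed

lemma (in prob_space) centered_gaussian_even_moment_le:
  assumes "gaussian_rv M Z" "integrable M Z" "expectation Z = 0"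
    and var: "expectation (\<lambda>\<omega>. (Z \<omega>)\<^sup>2) \<le> V" and "p > 0"
  shows "(\<integral>\<^sup>+\<omega>. ennreal ((Z \<omega>) ^ (2 * p)) \<partial>M) \<le> ennreal (fact (2 * p) / (2 ^ p * fact p) * V ^ p)"
  using assms(1) unfolding gaussian_rv_def
proof (elim disjE exE conjE)
  fix m \<sigma> :: real
  assume "\<sigma> > 0" and D: "distributed M lborel Z (normal_density m \<sigma>)"
  have "m = 0"
    using normal_distributed_expectation[OF \<open>\<sigma> > 0\<close> D] assms(3) by simp
  with D have D0: "distributed M lborel Z (normal_density 0 \<sigma>)" by simp
  have "(\<integral>\<^sup>+\<omega>. ennreal ((Z \<omega>) ^ (2 * 1)) \<partial>M) = ennreal (\<sigma>\<^sup>2)"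
    using nn_integral_normal_even_power[OF D0 \<open>\<sigma> > 0\<close>, of 1] \<open>\<sigma> > 0\<close> by (simp add: field_simps)
  then have "expectation (\<lambda>\<omega>. (Z \<omega>)\<^sup>2) = \<sigma>\<^sup>2"
    using nn_integral_eq_integrable[of "\<lambda>\<omega>. (Z \<omega>)\<^sup>2" M "\<sigma>\<^sup>2"] assms(2) by simp
  with var have "\<sigma>\<^sup>2 \<le> V" by simp
  have "(\<integral>\<^sup>+\<omega>. ennreal ((Z \<omega>) ^ (2 * p)) \<partial>M) = ennreal (fact (2 * p) / (2 ^ p * fact p) * (\<sigma>\<^sup>2) ^ p)"
    using nn_integral_normal_even_power[OF D0 \<open>\<sigma> > 0\<close>, of p] \<open>\<sigma> > 0\<close> by (simp add: field_simps)
  also have "\<dots> \<le> ennreal (fact (2 * p) / (2 ^ p * fact p) * V ^ p)"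
    using \<open>\<sigma>\<^sup>2 \<le> V\<close> by (intro ennreal_leI mult_left_mono power_mono) auto
  finally show ?thesis .
next
  fix z assume Z_const: "AE \<omega> in M. Z \<omega> = z"
  have "expectation Z = expectation (\<lambda>_. z)"
    using Z_const assms(2) by (intro integral_cong_AE) auto
  with assms(3) have "z = 0" by (simp add: prob_space)
  with Z_const assms(5) have "(\<integral>\<^sup>+\<omega>. ennreal ((Z \<omega>) ^ (2 * p)) \<partial>M) = 0"
    by (subst nn_integral_cong_AE[where v = "\<lambda>_. 0"]) auto
  then show ?thesis by simp
qed

lemma gaussian_process_increment:
  assumes "gaussian_process M G" "0 \<le> s" "0 \<le> t"
  shows "gaussian_rv M (\<lambda>\<omega>. G t \<omega> - G s \<omega>)"
proof -
  let ?ts = "\<lambda>i::nat. if i = 0 then t else s" and ?a = "\<lambda>i::nat. if i = 0 then 1 else - 1 :: real"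
  have "gaussian_rv M (\<lambda>\<omega>. \<Sum>i<2. ?a i * G (?ts i) \<omega>)"
    using assms unfolding gaussian_process_def by auto
  moreover have "(\<lambda>\<omega>. \<Sum>i<2. ?a i * G (?ts i) \<omega>) = (\<lambda>\<omega>. G t \<omega> - G s \<omega>)"
    by (simp add: numeral_2_eq_2)
  ultimately show ?thesis by simp
qed

lemma (in prob_space) gaussian_increment_moment_le:
  assumes "gaussian_process M G" "centered_process M G" "0 \<le> s" "0 \<le> t" "m > 0"
    and var: "expectation (\<lambda>\<omega>. (G t \<omega> - G s \<omega>)\<^sup>2) \<le> c * \<bar>t - s\<bar> powr (2 * \<gamma>)"
  shows "(\<integral>\<^sup>+\<omega>. ennreal ((G t \<omega> - G s \<omega>) ^ (2 * m)) \<partial>M)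
           \<le> ennreal (fact (2 * m) / (2 ^ m * fact m) * c ^ m * \<bar>t - s\<bar> powr (2 * \<gamma> * real m))"
proof -
  have "integrable M (G t)" "integrable M (G s)" "expectation (G t) = 0" "expectation (G s) = 0"
    using assms(2-4) unfolding centered_process_def by auto
  then have "(\<integral>\<^sup>+\<omega>. ennreal ((G t \<omega> - G s \<omega>) ^ (2 * m)) \<partial>M)
           \<le> ennreal (fact (2 * m) / (2 ^ m * fact m) * (c * \<bar>t - s\<bar> powr (2 * \<gamma>)) ^ m)"
    by (intro centered_gaussian_even_moment_le assms(5) var gaussian_process_increment[OF assms(1,3,4)]) auto
  also have "(c * \<bar>t - s\<bar> powr (2 * \<gamma>)) ^ m = c ^ m * \<bar>t - s\<bar> powr (2 * \<gamma> * real m)"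
    using assms(5) by (cases "t = s") (auto simp: power_mult_distrib powr_power mult.commute)
  finally show ?thesis by (simp add: mult.assoc)
qed

section \<open>Exponential growth of paths by dyadic chaining\<close>

lemma dyadic_chain_bound:
  fixes f :: "real \<Rightarrow> real" and b :: "nat \<Rightarrow> real"
  assumes inc: "\<And>k j. j < 2 ^ k \<Longrightarrow> \<bar>f (a + real (j + 1) / 2 ^ k) - f (a + real j / 2 ^ k)\<bar> \<le> b k"
    and b_nonneg: "\<And>k. 0 \<le> b k"
  shows "j \<le> 2 ^ K \<Longrightarrow> \<bar>f (a + real j / 2 ^ K) - f a\<bar> \<le> (\<Sum>k\<le>K. b k)"
proof (induction K arbitrary: j)
  case 0
  then consider "j = 0" | "j = 1" by fastforce
  then show ?case
    using b_nonneg[of 0] inc[of 0 0] by cases simp_all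
next
  case (Suc K)
  have sum_le: "(\<Sum>k\<le>K. b k) \<le> (\<Sum>k\<le>Suc K. b k)"
    using b_nonneg[of "Suc K"] by simp
  obtain i where "j = 2 * i \<or> j = 2 * i + 1"
    by (metis dvd_mult_div_cancel odd_two_times_div_two_succ)
  then show ?case
  proof
    assume j: "j = 2 * i"
    then have "\<bar>f (a + real i / 2 ^ K) - f a\<bar> \<le> (\<Sum>k\<le>K. b k)"
      using Suc by simp
    moreover have "real j / 2 ^ Suc K = real i / 2 ^ K"
      using j by (simp add: field_simps)
    ultimately show ?thesis
      using sum_le by simp
  next
    assume j: "j = 2 * i + 1"
    then have "i < 2 ^ K"
      using Suc.prems by simp
    then have "\<bar>f (a + real i / 2 ^ K) - f a\<bar> \<le> (\<Sum>k\<le>K. b k)"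
      using Suc.IH[of i] by simp
    moreover have "\<bar>f (a + real j / 2 ^ Suc K) - f (a + real i / 2 ^ K)\<bar> \<le> b (Suc K)"
      using inc[of "2 * i" "Suc K"] \<open>i < 2 ^ K\<close> j by (simp add: field_simps)
    ultimately show ?thesis
      by simp
  qed
qed

lemma dyadic_approximation:
  fixes a t :: real
  assumes t: "t \<in> {a..a+1}"
  obtains j :: "nat \<Rightarrow> nat" where "\<And>K. j K \<le> 2 ^ K" and "(\<lambda>K. a + real (j K) / 2 ^ K) \<longlonglongrightarrow> t"
proof
  define j where "j K = nat \<lfloor>(t - a) * 2 ^ K\<rfloor>" for K :: nat
  have j_eq: "real (j K) = of_int \<lfloor>(t - a) * 2 ^ K\<rfloor>" for K
    using t unfolding j_def by simp
  have j: "(t - a) * 2 ^ K - 1 \<le> real (j K)" "real (j K) \<le> (t - a) * 2 ^ K" for K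
    unfolding j_eq by linarith+
  show "j K \<le> 2 ^ K" for K
  proof -
    have "(t - a) * 2 ^ K \<le> 1 * 2 ^ K"
      using t by (intro mult_right_mono) auto
    then have "real (j K) \<le> 2 ^ K"
      using j(2)[of K] by linarith
    then show ?thesis
      by (metis of_nat_le_iff of_nat_numeral of_nat_power)
  qed
  have bounds: "t - 1 / 2 ^ K \<le> a + real (j K) / 2 ^ K" "a + real (j K) / 2 ^ K \<le> t" for K
  proof -
    have "((t - a) * 2 ^ K - 1) / 2 ^ K \<le> real (j K) / 2 ^ K" "real (j K) / 2 ^ K \<le> (t - a) * 2 ^ K / 2 ^ K"
      using j[of K] by (intro divide_right_mono; simp)+
    then show "t - 1 / 2 ^ K \<le> a + real (j K) / 2 ^ K" "a + real (j K) / 2 ^ K \<le> t"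
      by (simp_all add: diff_divide_distrib)
  qed
  show "(\<lambda>K. a + real (j K) / 2 ^ K) \<longlonglongrightarrow> t"
  proof (rule tendsto_sandwich[OF _ _ _ tendsto_const])
    have "(\<lambda>K. t - (1 / 2) ^ K) \<longlonglongrightarrow> t - 0"
      by (intro tendsto_intros) simp
    then show "(\<lambda>K. t - 1 / 2 ^ K) \<longlonglongrightarrow> t"
      by (simp add: power_one_over)
  qed (use bounds in auto)
qed

lemma continuous_dyadic_chain_bound:
  fixes f :: "real \<Rightarrow> real" and b :: "nat \<Rightarrow> real"
  assumes inc: "\<And>k j. j < 2 ^ k \<Longrightarrow> \<bar>f (a + real (j + 1) / 2 ^ k) - f (a + real j / 2 ^ k)\<bar> \<le> b k"
    and b_nonneg: "\<And>k. 0 \<le> b k"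
    and cont: "continuous_on {a..a+1} f" and t: "t \<in> {a..a+1}"
  shows "ennreal \<bar>f t - f a\<bar> \<le> (\<Sum>k. ennreal (b k))"
proof -
  obtain j where j_le: "\<And>K. j K \<le> 2 ^ K" and lim: "(\<lambda>K. a + real (j K) / 2 ^ K) \<longlonglongrightarrow> t"
    using dyadic_approximation[OF t] by blast
  have "a + real (j K) / 2 ^ K \<in> {a..a+1}" for K
    using j_le[of K] by (simp add: field_simps)
  then have "(\<lambda>K. f (a + real (j K) / 2 ^ K)) \<longlonglongrightarrow> f t"
    using t by (intro continuous_on_tendsto_compose[OF cont lim]) auto
  then have "(\<lambda>K. ennreal \<bar>f (a + real (j K) / 2 ^ K) - f a\<bar>) \<longlonglongrightarrow> ennreal \<bar>f t - f a\<bar>"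
    by (intro tendsto_intros)
  moreover have "ennreal \<bar>f (a + real (j K) / 2 ^ K) - f a\<bar> \<le> (\<Sum>k. ennreal (b k))" for K
  proof -
    have "ennreal \<bar>f (a + real (j K) / 2 ^ K) - f a\<bar> \<le> ennreal (\<Sum>k\<le>K. b k)"
      by (intro ennreal_leI dyadic_chain_bound[where f = f and a = a, OF inc b_nonneg j_le])
    also have "\<dots> = (\<Sum>k\<le>K. ennreal (b k))"
      using b_nonneg by (simp add: sum_nonneg)
    also have "\<dots> \<le> (\<Sum>k. ennreal (b k))"
      by (rule sum_le_suminf) auto
    finally show ?thesis .
  qed
  ultimately show ?thesis
    by (blast intro: LIMSEQ_le_const2)
qed

lemma abs_le_add_power_div:
  fixes x l :: real
  assumes "l > 0" "m > 0"
  shows "\<bar>x\<bar> \<le> l + x ^ (2 * m) / l ^ (2 * m - 1)"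
proof (cases "\<bar>x\<bar> \<le> l")
  case True
  moreover have "0 \<le> x ^ (2 * m) / l ^ (2 * m - 1)"
    using assms by (simp add: power_mult)
  ultimately show ?thesis by linarith
next
  case False
  then have "\<bar>x\<bar> * l ^ (2 * m - 1) \<le> \<bar>x\<bar> * \<bar>x\<bar> ^ (2 * m - 1)"
    using assms by (intro mult_left_mono power_mono) auto
  also have "\<dots> = x ^ (2 * m)"
    using assms by (simp add: power_abs power_mult flip: power_Suc)
  finally have "\<bar>x\<bar> \<le> x ^ (2 * m) / l ^ (2 * m - 1)"
    using assms by (simp add: field_simps)
  then show ?thesis
    using assms by linarith
qed

lemma dyadic_scaling_identity:
  fixes \<beta> :: real and m k :: nat
  assumes "m > 0"
  defines "q \<equiv> 2 powr (- (\<beta> - 1) / (2 * real m))"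
  shows "2 ^ k * (1 / 2 ^ k) powr \<beta> = q ^ k * q ^ (k * (2 * m - 1))"
proof -
  have "q ^ k * q ^ (k * (2 * m - 1)) = q ^ (k * (2 * m))"
    using assms(1) by (simp flip: power_add add: algebra_simps)
  also have "\<dots> = 2 powr (real (k * (2 * m)) * (- (\<beta> - 1) / (2 * real m)))"
    unfolding q_def by (rule powr_power) simp
  also have "real (k * (2 * m)) * (- (\<beta> - 1) / (2 * real m)) = real k - real k * \<beta>"
    using assms(1) by (simp add: field_simps)
  also have "2 powr (real k - real k * \<beta>) = 2 powr real k / (2 powr real k) powr \<beta>"
    by (simp add: powr_diff powr_powr mult.commute)
  also have "\<dots> = 2 ^ k * (1 / 2 ^ k) powr \<beta>"
    by (simp add: powr_realpow powr_divide)
  finally show ?thesis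
    by (rule sym)
qed

definition dyadic_increment :: "(real \<Rightarrow> 'a \<Rightarrow> real) \<Rightarrow> real \<Rightarrow> nat \<Rightarrow> nat \<Rightarrow> 'a \<Rightarrow> real" where
  "dyadic_increment G a k j \<omega> = G (a + real (j + 1) / 2 ^ k) \<omega> - G (a + real j / 2 ^ k) \<omega>"

(* A soft maximum of the 2^k increments of level k: it dominates each of them (abs_le_add_power_div),
   and unlike the maximum its expectation is a sum of moments. *)
definition dyadic_level_bound :: "real \<Rightarrow> nat \<Rightarrow> (real \<Rightarrow> 'a \<Rightarrow> real) \<Rightarrow> real \<Rightarrow> nat \<Rightarrow> 'a \<Rightarrow> real" where
  "dyadic_level_bound q m G a k \<omega> =
     q ^ k + (\<Sum>j<2 ^ k. dyadic_increment G a k j \<omega> ^ (2 * m)) / q ^ (k * (2 * m - 1))"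

lemma borel_measurable_dyadic_increment:
  assumes "\<And>t. 0 \<le> t \<Longrightarrow> G t \<in> borel_measurable M" "0 \<le> a"
  shows "dyadic_increment G a k j \<in> borel_measurable M"
  unfolding dyadic_increment_def using assms by (intro borel_measurable_diff) auto

lemma dyadic_level_bound_nonneg:
  assumes "0 < q"
  shows "0 \<le> dyadic_level_bound q m G a k \<omega>"
  unfolding dyadic_level_bound_def using assms
  by (intro add_nonneg_nonneg divide_nonneg_pos sum_nonneg) (auto simp: power_mult)

lemma abs_dyadic_increment_le:
  assumes "0 < q" "0 < m" "j < 2 ^ k"
  shows "\<bar>dyadic_increment G a k j \<omega>\<bar> \<le> dyadic_level_bound q m G a k \<omega>"
proof -
  let ?D = "dyadic_increment G a k"
  have "\<bar>?D j \<omega>\<bar> \<le> q ^ k + ?D j \<omega> ^ (2 * m) / (q ^ k) ^ (2 * m - 1)"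
    using assms(1,2) by (intro abs_le_add_power_div) auto
  also have "?D j \<omega> ^ (2 * m) \<le> (\<Sum>i<2 ^ k. ?D i \<omega> ^ (2 * m))"
    using assms(3) by (intro member_le_sum) (auto simp: power_mult)
  then have "?D j \<omega> ^ (2 * m) / (q ^ k) ^ (2 * m - 1) \<le> (\<Sum>i<2 ^ k. ?D i \<omega> ^ (2 * m)) / q ^ (k * (2 * m - 1))"
    using assms(1) by (simp add: divide_right_mono power_mult)
  finally show ?thesis
    unfolding dyadic_level_bound_def by simp
qed

(* This q makes both terms of the level bound have expectation of order q^k. *)
lemma (in prob_space) nn_integral_dyadic_level_bound_le:
  fixes G :: "real \<Rightarrow> 'a \<Rightarrow> real" and m :: nat and A \<beta> a :: real
  assumes meas: "\<And>t. 0 \<le> t \<Longrightarrow> G t \<in> borel_measurable M"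
    and "m > 0" "0 \<le> A" "0 \<le> a"
    and moment: "\<And>s t. 0 \<le> s \<Longrightarrow> 0 \<le> t \<Longrightarrow>
      (\<integral>\<^sup>+\<omega>. ennreal ((G t \<omega> - G s \<omega>) ^ (2 * m)) \<partial>M) \<le> ennreal (A * \<bar>t - s\<bar> powr \<beta>)"
  defines "q \<equiv> 2 powr (- (\<beta> - 1) / (2 * real m))"
  shows "(\<integral>\<^sup>+\<omega>. ennreal (dyadic_level_bound q m G a k \<omega>) \<partial>M) \<le> ennreal ((1 + A) * q ^ k)"
proof -
  let ?D = "dyadic_increment G a k"
  define r where "r = 1 / q ^ (k * (2 * m - 1))"
  have "0 < q" "0 \<le> r"
    by (simp_all add: q_def r_def)
  have [measurable]: "?D j \<in> borel_measurable M" for j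
    using meas \<open>0 \<le> a\<close> by (rule borel_measurable_dyadic_increment)
  have D_moment: "(\<integral>\<^sup>+\<omega>. ennreal (?D j \<omega> ^ (2 * m)) \<partial>M) \<le> ennreal (A * (1 / 2 ^ k) powr \<beta>)" for j
    using moment[of "a + real j / 2 ^ k" "a + real (j + 1) / 2 ^ k"] \<open>0 \<le> a\<close>
    unfolding dyadic_increment_def by (simp add: field_simps)
  have "(\<integral>\<^sup>+\<omega>. ennreal (dyadic_level_bound q m G a k \<omega>) \<partial>M)
      = (\<integral>\<^sup>+\<omega>. ennreal (q ^ k) + (\<Sum>j<2 ^ k. ennreal (?D j \<omega> ^ (2 * m))) * ennreal r \<partial>M)"
  proof (intro nn_integral_cong)
    fix \<omega>
    have "dyadic_level_bound q m G a k \<omega> = q ^ k + (\<Sum>j<2 ^ k. ?D j \<omega> ^ (2 * m)) * r"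
      by (simp add: dyadic_level_bound_def r_def)
    then show "ennreal (dyadic_level_bound q m G a k \<omega>) = ennreal (q ^ k) + (\<Sum>j<2 ^ k. ennreal (?D j \<omega> ^ (2 * m))) * ennreal r"
      using \<open>0 < q\<close> \<open>0 \<le> r\<close> by (simp add: ennreal_mult power_mult sum_nonneg)
  qed
  also have "\<dots> = ennreal (q ^ k) + (\<Sum>j<2 ^ k. \<integral>\<^sup>+\<omega>. ennreal (?D j \<omega> ^ (2 * m)) \<partial>M) * ennreal r"
    by (simp add: nn_integral_add nn_integral_multc nn_integral_sum emeasure_space_1 del: sum_ennreal)
  also have "\<dots> \<le> ennreal (q ^ k) + (\<Sum>j<(2::nat) ^ k. ennreal (A * (1 / 2 ^ k) powr \<beta>)) * ennreal r"
    by (intro add_left_mono mult_right_mono sum_mono D_moment) auto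
  also have "\<dots> = ennreal (q ^ k + A * (2 ^ k * (1 / 2 ^ k) powr \<beta>) * r)"
    using \<open>0 < q\<close> \<open>0 \<le> r\<close> assms(3) by (simp add: ennreal_mult ennreal_power[symmetric] algebra_simps)
  also have "2 ^ k * (1 / 2 ^ k) powr \<beta> = q ^ k * q ^ (k * (2 * m - 1))"
    unfolding q_def by (rule dyadic_scaling_identity[OF assms(2)])
  finally show ?thesis
    using \<open>0 < q\<close> by (simp add: r_def algebra_simps)
qed

lemma (in prob_space) unit_interval_oscillation_bound:
  fixes G :: "real \<Rightarrow> 'a \<Rightarrow> real" and m :: nat and A \<beta> :: real
  assumes meas: "\<And>t. 0 \<le> t \<Longrightarrow> G t \<in> borel_measurable M"
    and "m > 0" "1 < \<beta>" "0 \<le> A"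
    and moment: "\<And>s t. 0 \<le> s \<Longrightarrow> 0 \<le> t \<Longrightarrow>
      (\<integral>\<^sup>+\<omega>. ennreal ((G t \<omega> - G s \<omega>) ^ (2 * m)) \<partial>M) \<le> ennreal (A * \<bar>t - s\<bar> powr \<beta>)"
  obtains K :: real and S :: "real \<Rightarrow> 'a \<Rightarrow> ennreal"
  where "0 \<le> K" and "\<And>a. 0 \<le> a \<Longrightarrow> S a \<in> borel_measurable M"
    and "\<And>a. 0 \<le> a \<Longrightarrow> (\<integral>\<^sup>+\<omega>. S a \<omega> \<partial>M) \<le> ennreal K"
    and "\<And>a \<omega> t. continuous_on {a..a+1} (\<lambda>t. G t \<omega>) \<Longrightarrow> t \<in> {a..a+1} \<Longrightarrow>
           ennreal \<bar>G t \<omega> - G a \<omega>\<bar> \<le> S a \<omega>"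
proof -
  define q where "q = 2 powr (- (\<beta> - 1) / (2 * real m))"
  have "- (\<beta> - 1) / (2 * real m) < 0"
    using assms(2,3) by (simp add: divide_neg_pos)
  then have "0 < q" "q < 1"
    unfolding q_def by (auto intro: powr_less_one)
  define S where "S a \<omega> = (\<Sum>k. ennreal (dyadic_level_bound q m G a k \<omega>))" for a \<omega>
  show ?thesis
  proof
    show "0 \<le> (1 + A) / (1 - q)"
      using \<open>q < 1\<close> assms(4) by simp
  next
    fix a :: real
    assume "0 \<le> a"
    then have [measurable]: "dyadic_increment G a k j \<in> borel_measurable M" for k j
      using meas by (intro borel_measurable_dyadic_increment)
    show "S a \<in> borel_measurable M"
      unfolding S_def dyadic_level_bound_def by measurable
    have "(\<integral>\<^sup>+\<omega>. S a \<omega> \<partial>M) = (\<Sum>k. \<integral>\<^sup>+\<omega>. ennreal (dyadic_level_bound q m G a k \<omega>) \<partial>M)"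
      unfolding S_def dyadic_level_bound_def by (rule nn_integral_suminf) measurable
    also have "\<dots> \<le> (\<Sum>k. ennreal ((1 + A) * q ^ k))"
      unfolding q_def using \<open>0 \<le> a\<close>
      by (intro suminf_le nn_integral_dyadic_level_bound_le[OF meas assms(2,4) _ moment]) auto
    also have "\<dots> = ennreal ((1 + A) / (1 - q))"
      using geometric_sums[of q] \<open>0 < q\<close> \<open>q < 1\<close> assms(4)
      by (intro suminf_ennreal_eq) (auto dest: sums_mult[where c = "1 + A"])
    finally show "(\<integral>\<^sup>+\<omega>. S a \<omega> \<partial>M) \<le> ennreal ((1 + A) / (1 - q))" .
  next
    fix a \<omega> t
    assume "continuous_on {a..a+1} (\<lambda>t. G t \<omega>)" "t \<in> {a..a+1}"
    then show "ennreal \<bar>G t \<omega> - G a \<omega>\<bar> \<le> S a \<omega>"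
      unfolding S_def using abs_dyadic_increment_le[OF \<open>0 < q\<close> assms(2)] dyadic_level_bound_nonneg[OF \<open>0 < q\<close>]
      by (intro continuous_dyadic_chain_bound[where f = "\<lambda>t. G t \<omega>"]) (auto simp: dyadic_increment_def)
  qed
qed

lemma exp_bound_of_weighted_unit_oscillations:
  fixes f :: "real \<Rightarrow> real" and S :: "nat \<Rightarrow> ennreal" and a :: real
  assumes "0 \<le> a"
    and osc: "\<And>n t. t \<in> {real n..real n + 1} \<Longrightarrow> ennreal \<bar>f t - f (real n)\<bar> \<le> S n"
    and finite: "(\<Sum>n. ennreal (exp (- a * real n)) * (ennreal \<bar>f (real n)\<bar> + S n)) \<noteq> \<infinity>"
  shows "\<exists>w. \<forall>t\<ge>0. \<bar>f t\<bar> \<le> w * exp (a * t)"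
proof -
  define w where "w = enn2real (\<Sum>n. ennreal (exp (- a * real n)) * (ennreal \<bar>f (real n)\<bar> + S n))"
  have "\<bar>f t\<bar> \<le> w * exp (a * t)" if "0 \<le> t" for t
  proof -
    define n where "n = nat \<lfloor>t\<rfloor>"
    have "real n = of_int \<lfloor>t\<rfloor>"
      using that by (simp add: n_def)
    then have t: "t \<in> {real n..real n + 1}"
      by simp
    have "ennreal \<bar>f t\<bar> \<le> ennreal (\<bar>f (real n)\<bar> + \<bar>f t - f (real n)\<bar>)"
      by (intro ennreal_leI) linarith
    also have "\<dots> \<le> ennreal \<bar>f (real n)\<bar> + S n"
      using osc[OF t] by (simp add: add_left_mono)
    finally have "ennreal (exp (- a * real n) * \<bar>f t\<bar>) \<le> ennreal (exp (- a * real n)) * (ennreal \<bar>f (real n)\<bar> + S n)"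
      by (simp add: ennreal_mult' mult_left_mono)
    also have "\<dots> \<le> (\<Sum>n. ennreal (exp (- a * real n)) * (ennreal \<bar>f (real n)\<bar> + S n))"
      using sum_le_suminf[OF summableI, of "{n}"] by simp
    also have "\<dots> = ennreal w"
      using finite by (simp add: w_def less_top)
    finally have "exp (- a * real n) * \<bar>f t\<bar> \<le> w"
      by (simp add: w_def)
    then have "\<bar>f t\<bar> \<le> w * exp (a * real n)"
      by (simp add: exp_minus field_simps)
    also have "\<dots> \<le> w * exp (a * t)"
      using t \<open>0 \<le> a\<close> by (intro mult_left_mono) (auto simp: w_def mult_left_mono)
    finally show ?thesis .
  qed
  then show ?thesis by blast
qed

lemma (in prob_space) nn_integral_abs_le_one_plus_even_moment:
  assumes "Z \<in> borel_measurable M" "0 < m"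
  shows "(\<integral>\<^sup>+\<omega>. ennreal \<bar>Z \<omega>\<bar> \<partial>M) \<le> 1 + (\<integral>\<^sup>+\<omega>. ennreal (Z \<omega> ^ (2 * m)) \<partial>M)"
proof -
  have "(\<integral>\<^sup>+\<omega>. ennreal \<bar>Z \<omega>\<bar> \<partial>M) \<le> (\<integral>\<^sup>+\<omega>. 1 + ennreal (Z \<omega> ^ (2 * m)) \<partial>M)"
  proof (intro nn_integral_mono)
    fix \<omega>
    have "\<bar>Z \<omega>\<bar> \<le> 1 + Z \<omega> ^ (2 * m)"
      using abs_le_add_power_div[of 1 m "Z \<omega>"] assms(2) by simp
    then show "ennreal \<bar>Z \<omega>\<bar> \<le> 1 + ennreal (Z \<omega> ^ (2 * m))"
      by (simp add: power_mult ennreal_leI flip: ennreal_1 ennreal_plus)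
  qed
  also have "\<dots> = 1 + (\<integral>\<^sup>+\<omega>. ennreal (Z \<omega> ^ (2 * m)) \<partial>M)"
    using assms(1) by (subst nn_integral_add) (auto simp: emeasure_space_1)
  finally show ?thesis .
qed

lemma (in prob_space) AE_exp_weighted_sum_finite:
  fixes X :: "nat \<Rightarrow> 'a \<Rightarrow> ennreal" and a B C \<beta> :: real
  assumes "0 < a" "0 \<le> B" "0 \<le> C" "\<And>n. X n \<in> borel_measurable M"
    and X_int: "\<And>n. (\<integral>\<^sup>+\<omega>. X n \<omega> \<partial>M) \<le> ennreal (B + C * real n powr \<beta>)"
  shows "AE \<omega> in M. (\<Sum>n. ennreal (exp (- a * real n)) * X n \<omega>) \<noteq> \<infinity>"
proof (rule nn_integral_PInf_AE)
  show "(\<lambda>\<omega>. \<Sum>n. ennreal (exp (- a * real n)) * X n \<omega>) \<in> borel_measurable M"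
    using assms(4) by measurable
  have "summable (\<lambda>n. exp (- a * real n) * (B + C * real n powr \<beta>))"
  proof (rule summable_comparison_test_bigo)
    show "summable (\<lambda>n. norm (exp (- a / 2) ^ n))"
      using \<open>0 < a\<close> by (auto simp: norm_power intro!: summable_geometric)
    have "(\<lambda>n. exp (- a * real n) * (B + C * real n powr \<beta>)) \<in> O(\<lambda>n. exp (- (a / 2) * real n))"
      using \<open>0 < a\<close> by real_asymp
    then show "(\<lambda>n. exp (- a * real n) * (B + C * real n powr \<beta>)) \<in> O(\<lambda>n. exp (- a / 2) ^ n)"
      by (simp add: exp_of_nat_mult[symmetric] mult.commute)
  qed
  have "(\<integral>\<^sup>+\<omega>. (\<Sum>n. ennreal (exp (- a * real n)) * X n \<omega>) \<partial>M) = (\<Sum>n. ennreal (exp (- a * real n)) * (\<integral>\<^sup>+\<omega>. X n \<omega> \<partial>M))"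
    using assms(4) by (simp add: nn_integral_suminf nn_integral_cmult)
  also have "\<dots> \<le> (\<Sum>n. ennreal (exp (- a * real n) * (B + C * real n powr \<beta>)))"
    using X_int by (intro suminf_le) (auto simp: ennreal_mult' mult_left_mono)
  also have "\<dots> = ennreal (\<Sum>n. exp (- a * real n) * (B + C * real n powr \<beta>))"
    using \<open>summable _\<close> assms(2,3) by (intro suminf_ennreal2) auto
  finally show "(\<integral>\<^sup>+\<omega>. (\<Sum>n. ennreal (exp (- a * real n)) * X n \<omega>) \<partial>M) \<noteq> \<infinity>"
    by (auto simp: top_unique)
qed

lemma (in prob_space) AE_paths_exp_bounded:
  fixes G :: "real \<Rightarrow> 'a \<Rightarrow> real" and m :: nat and A \<beta> a :: real
  assumes meas: "\<And>t. 0 \<le> t \<Longrightarrow> G t \<in> borel_measurable M"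
    and G0: "AE \<omega> in M. G 0 \<omega> = 0"
    and cont: "\<And>\<omega>. \<omega> \<in> space M \<Longrightarrow> continuous_on {0..} (\<lambda>t. G t \<omega>)"
    and "m > 0" "1 < \<beta>" "0 \<le> A" "0 < a"
    and moment: "\<And>s t. 0 \<le> s \<Longrightarrow> 0 \<le> t \<Longrightarrow>
      (\<integral>\<^sup>+\<omega>. ennreal ((G t \<omega> - G s \<omega>) ^ (2 * m)) \<partial>M) \<le> ennreal (A * \<bar>t - s\<bar> powr \<beta>)"
  shows "AE \<omega> in M. \<exists>w. \<forall>t\<ge>0. \<bar>G t \<omega>\<bar> \<le> w * exp (a * t)"
proof -
  obtain K S where "0 \<le> K" and S_meas: "\<And>x. 0 \<le> x \<Longrightarrow> S x \<in> borel_measurable M"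
    and S_int: "\<And>x. 0 \<le> x \<Longrightarrow> (\<integral>\<^sup>+\<omega>. S x \<omega> \<partial>M) \<le> ennreal K"
    and S_osc: "\<And>x \<omega> t. continuous_on {x..x+1} (\<lambda>t. G t \<omega>) \<Longrightarrow> t \<in> {x..x+1} \<Longrightarrow>
                   ennreal \<bar>G t \<omega> - G x \<omega>\<bar> \<le> S x \<omega>"
    using unit_interval_oscillation_bound[OF meas assms(4-6) moment] by blast
  have first_moment: "(\<integral>\<^sup>+\<omega>. ennreal \<bar>G x \<omega>\<bar> \<partial>M) \<le> ennreal (1 + A * x powr \<beta>)" if "0 \<le> x" for x
  proof -
    have "(\<integral>\<^sup>+\<omega>. ennreal \<bar>G x \<omega>\<bar> \<partial>M) = (\<integral>\<^sup>+\<omega>. ennreal \<bar>G x \<omega> - G 0 \<omega>\<bar> \<partial>M)"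
      using G0 by (intro nn_integral_cong_AE) auto
    also have "\<dots> \<le> 1 + (\<integral>\<^sup>+\<omega>. ennreal ((G x \<omega> - G 0 \<omega>) ^ (2 * m)) \<partial>M)"
      using meas[OF that] meas[of 0] \<open>m > 0\<close> by (intro nn_integral_abs_le_one_plus_even_moment) auto
    also have "\<dots> \<le> 1 + ennreal (A * \<bar>x - 0\<bar> powr \<beta>)"
      using that by (intro add_left_mono moment) auto
    finally show ?thesis
      using that assms(6) by simp
  qed
  have "AE \<omega> in M. (\<Sum>n. ennreal (exp (- a * real n)) * (ennreal \<bar>G (real n) \<omega>\<bar> + S (real n) \<omega>)) \<noteq> \<infinity>"
  proof (rule AE_exp_weighted_sum_finite)
    show "(\<lambda>\<omega>. ennreal \<bar>G (real n) \<omega>\<bar> + S (real n) \<omega>) \<in> borel_measurable M" for n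
      using meas[of "real n"] S_meas[of "real n"] by measurable
    show "(\<integral>\<^sup>+\<omega>. ennreal \<bar>G (real n) \<omega>\<bar> + S (real n) \<omega> \<partial>M) \<le> ennreal (1 + K + A * real n powr \<beta>)" for n
    proof -
      have "(\<integral>\<^sup>+\<omega>. ennreal \<bar>G (real n) \<omega>\<bar> + S (real n) \<omega> \<partial>M)
          = (\<integral>\<^sup>+\<omega>. ennreal \<bar>G (real n) \<omega>\<bar> \<partial>M) + (\<integral>\<^sup>+\<omega>. S (real n) \<omega> \<partial>M)"
        using meas[of "real n"] S_meas[of "real n"] by (intro nn_integral_add) auto
      also have "\<dots> \<le> ennreal (1 + A * real n powr \<beta>) + ennreal K"
        by (intro add_mono first_moment S_int) auto
      also have "\<dots> = ennreal (1 + K + A * real n powr \<beta>)"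
        using assms(6) \<open>0 \<le> K\<close> by (simp flip: ennreal_plus add: add_ac)
      finally show ?thesis .
    qed
  qed (use assms(6,7) \<open>0 \<le> K\<close> in auto)
  then show ?thesis
    using AE_space
  proof eventually_elim
    case (elim \<omega>)
    have cont_n: "continuous_on {real n..real n + 1} (\<lambda>t. G t \<omega>)" for n
      using cont[OF elim(2)] by (rule continuous_on_subset) auto
    show ?case
    proof (intro exp_bound_of_weighted_unit_oscillations[where S = "\<lambda>n. S (real n) \<omega>"])
      show "0 \<le> a"
        using \<open>0 < a\<close> by simp
      show "ennreal \<bar>G t \<omega> - G (real n) \<omega>\<bar> \<le> S (real n) \<omega>" if "t \<in> {real n..real n + 1}" for n t
        using S_osc that cont_n by blast
      show "(\<Sum>n. ennreal (exp (- a * real n)) * (ennreal \<bar>G (real n) \<omega>\<bar> + S (real n) \<omega>)) \<noteq> \<infinity>"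
        using elim(1) .
    qed
  qed
qed

lemma locally_holder_imp_continuous_on:
  fixes f :: "real \<Rightarrow> real"
  assumes "\<alpha> > 0"
    and holder: "\<And>T. T > 0 \<Longrightarrow> \<exists>K. \<forall>s\<in>{0..T}. \<forall>t\<in>{0..T}. \<bar>f t - f s\<bar> \<le> K * \<bar>t - s\<bar> powr \<alpha>"
  shows "continuous_on {0..} f"
  unfolding continuous_on_def
proof
  fix x :: real
  assume x: "x \<in> {0..}"
  obtain K where K: "\<forall>s\<in>{0..x+1}. \<forall>t\<in>{0..x+1}. \<bar>f t - f s\<bar> \<le> K * \<bar>t - s\<bar> powr \<alpha>"
    using holder[of "x + 1"] x by auto
  have "((\<lambda>t. f t - f x) \<longlongrightarrow> 0) (at x within {0..})"
  proof (rule Lim_null_comparison)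
    show "\<forall>\<^sub>F t in at x within {0..}. norm (f t - f x) \<le> K * \<bar>t - x\<bar> powr \<alpha>"
      unfolding eventually_at_le
      using K x by (intro exI[of _ 1]) (auto simp: dist_real_def)
    have "((\<lambda>t. \<bar>t - x\<bar> powr \<alpha>) \<longlongrightarrow> 0) (at x within {0..})"
      using assms(1) by (intro tendsto_zero_powrI tendsto_eq_intros) auto
    then show "((\<lambda>t. K * \<bar>t - x\<bar> powr \<alpha>) \<longlongrightarrow> 0) (at x within {0..})"
      by (intro tendsto_mult_right_zero)
  qed
  then show "(f \<longlongrightarrow> f x) (at x within {0..})"
    by (simp add: Lim_null[symmetric])
qed

theorem mainTheorem2:
  fixes M :: "'a measure" and G X :: "real \<Rightarrow> 'a \<Rightarrow> real"
    and c \<gamma> \<theta> \<mu> :: real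
  assumes "prob_space M"
    and "gaussian_process M G"
    and "centered_process M G"
    and "AE \<omega> in M. G 0 \<omega> = 0"
    and "c > 0" and "0 < \<gamma>" and "\<gamma> < 1"
    and "\<And>s t. s \<ge> 0 \<Longrightarrow> t \<ge> 0 \<Longrightarrow>
           integral\<^sup>L M (\<lambda>\<omega>. (G t \<omega> - G s \<omega>)\<^sup>2) \<le> c * \<bar>t - s\<bar> powr (2 * \<gamma>)"
    and "\<And>\<omega> \<epsilon> T. \<omega> \<in> space M \<Longrightarrow> 0 < \<epsilon> \<Longrightarrow> \<epsilon> < \<gamma> \<Longrightarrow> T > 0 \<Longrightarrow>
           \<exists>K. \<forall>s\<in>{0..T}. \<forall>t\<in>{0..T}. \<bar>G t \<omega> - G s \<omega>\<bar> \<le> K * \<bar>t - s\<bar> powr (\<gamma> - \<epsilon>)"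
    and "\<theta> > 0"
    and "\<And>\<omega>. \<omega> \<in> space M \<Longrightarrow> continuous_on {0..} (\<lambda>t. X t \<omega>)"
    and "\<And>\<omega> t. \<omega> \<in> space M \<Longrightarrow> t \<ge> 0 \<Longrightarrow>
           X t \<omega> = \<mu> * \<theta> * t + \<theta> * integral {0..t} (\<lambda>s. X s \<omega>) + G t \<omega>"
  shows "AE \<omega> in M.
      ((\<lambda>T. exp (- \<theta> * T) * X T \<omega>) \<longlongrightarrow> \<mu> + zeta_inf \<theta> G \<omega>) at_top \<and>
      ((\<lambda>T. exp (- \<theta> * T) * integral {0..T} (\<lambda>s. X s \<omega>))
         \<longlongrightarrow> (\<mu> + zeta_inf \<theta> G \<omega>) / \<theta>) at_top \<and>
      ((\<lambda>T. exp (- \<theta> * T) / T * integral {0..T} (\<lambda>s. s * X s \<omega>))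
         \<longlongrightarrow> (\<mu> + zeta_inf \<theta> G \<omega>) / \<theta>) at_top \<and>
      (\<forall>\<delta>>0. ((\<lambda>T. exp (- \<theta> * T) / T powr \<delta> * integral {0..T} (\<lambda>s. \<bar>X s \<omega>\<bar>))
         \<longlongrightarrow> 0) at_top) \<and>
      ((\<lambda>T. exp (- 2 * \<theta> * T) * integral {0..T} (\<lambda>s. (X s \<omega>)\<^sup>2))
         \<longlongrightarrow> (\<mu> + zeta_inf \<theta> G \<omega>)\<^sup>2 / (2 * \<theta>)) at_top"
proof -
  interpret prob_space M by (rule assms(1))
  obtain m :: nat where m: "1 / \<gamma> < real m"
    using reals_Archimedean2 by blast
  then have "m > 0"
    using assms(6) by (metis divide_pos_pos of_nat_0_less_iff order.strict_trans zero_less_one)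
  have "1 < 2 * \<gamma> * real m"
    using m assms(6) by (simp add: field_simps)
  have G_meas: "\<And>t. 0 \<le> t \<Longrightarrow> G t \<in> borel_measurable M"
    using assms(2) unfolding gaussian_process_def by blast
  \<comment> \<open>The local Holder bound is used only for continuity; the growth of G comes from its moments.\<close>
  have G_cont: "continuous_on {0..} (\<lambda>t. G t \<omega>)" if "\<omega> \<in> space M" for \<omega>
    using assms(6) assms(9)[OF that, of "\<gamma> / 2"]
    by (intro locally_holder_imp_continuous_on[of "\<gamma> / 2"]) auto
  define A where "A = fact (2 * m) / (2 ^ m * fact m) * c ^ m"
  have moment: "(\<integral>\<^sup>+\<omega>. ennreal ((G t \<omega> - G s \<omega>) ^ (2 * m)) \<partial>M) \<le> ennreal (A * \<bar>t - s\<bar> powr (2 * \<gamma> * real m))"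
    if "0 \<le> s" "0 \<le> t" for s t
    using gaussian_increment_moment_le[OF assms(2,3) that \<open>m > 0\<close> assms(8)[OF that]] by (simp add: A_def)
  have "AE \<omega> in M. \<exists>w. \<forall>t\<ge>0. \<bar>G t \<omega>\<bar> \<le> w * exp (\<theta> / 2 * t)"
    using assms(5,10)
    by (intro AE_paths_exp_bounded[OF G_meas assms(4) G_cont \<open>m > 0\<close> \<open>1 < 2 * \<gamma> * real m\<close> _ _ moment])
      (auto simp: A_def)
  then show ?thesis
    using AE_space
  proof eventually_elim
    case (elim \<omega>)
    then obtain w where "\<And>t. 0 \<le> t \<Longrightarrow> \<bar>G t \<omega>\<bar> \<le> w * exp (\<theta> / 2 * t)"
      by blast
    with assms(10) show ?case
      unfolding zeta_inf_def
      by (intro linear_ode_exp_asymptotics[of \<theta> "\<theta> / 2"] assms(11,12) G_cont elim(2)) auto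
  qed
qed

end
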